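(* Fix $d,k\in\mathbb N$ and let $A\in\mathbb R^{d^k\times d^k}$ be positive semidefinite. Let $x=x_1\otimes\cdots\otimes x_k$, where $x_1,\dots,x_k\in\mathbb R^d$ are independent and each is either a Rademacher vector or a $\mathcal N(0,I_d)$ Gaussian vector. Then $\operatorname{Var}[x^\top Ax]\le(3^k\operatorname{tr}(A))^2$.
   Context: A Rademacher vector has iid entries uniform on $\{\pm1\}$; $\otimes$ is the Kronecker product. *)

theory Defs
  imports "HOL-Probability.Probability"
begin

text \<open>Vectors in R^n are functions nat => real (entries indexed 0..n-1);
  n x n matrices are functions nat => nat => real (entries indexed by 0..n-1).\<close>

definition psd :: "nat \<Rightarrow> (nat \<Rightarrow> nat \<Rightarrow> real) \<Rightarrow> bool" where
  "psd n A \<longleftrightarrow> (\<forall>i<n. \<forall>j<n. A i j = A j i) \<and>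
     (\<forall>v::nat \<Rightarrow> real. (\<Sum>i<n. \<Sum>j<n. v i * A i j * v j) \<ge> 0)"

definition mtrace :: "nat \<Rightarrow> (nat \<Rightarrow> nat \<Rightarrow> real) \<Rightarrow> real" where
  "mtrace n A = (\<Sum>i<n. A i i)"

definition quad_form :: "nat \<Rightarrow> (nat \<Rightarrow> nat \<Rightarrow> real) \<Rightarrow> (nat \<Rightarrow> real) \<Rightarrow> real" where
  "quad_form n A v = (\<Sum>i<n. \<Sum>j<n. v i * A i j * v j)"

text \<open>Kronecker product x_0 \<otimes> ... \<otimes> x_{k-1} of k vectors in R^d, a vector in R^(d^k):
  entry i (i < d^k) is the product of entries (x_j)_{i_j}, where
  i_0 ... i_{k-1} are the base-d digits of i, most significant first.\<close>

definition kron_vec :: "nat \<Rightarrow> nat \<Rightarrow> (nat \<Rightarrow> nat \<Rightarrow> real) \<Rightarrow> nat \<Rightarrow> real" where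
  "kron_vec d k xs i = (\<Prod>j<k. xs j ((i div d ^ (k - 1 - j)) mod d))"

definition rademacher :: "real measure" where
  "rademacher = measure_pmf (pmf_of_set {-1, 1})"

definition coord_law :: "bool \<Rightarrow> real measure" where
  "coord_law gauss = (if gauss then std_normal_distribution else rademacher)"

definition vec_law :: "nat \<Rightarrow> bool \<Rightarrow> (nat \<Rightarrow> real) measure" where
  "vec_law d gauss = PiM {..<d} (\<lambda>_. coord_law gauss)"

definition joint_law :: "nat \<Rightarrow> nat \<Rightarrow> (nat \<Rightarrow> bool) \<Rightarrow> (nat \<Rightarrow> nat \<Rightarrow> real) measure" where
  "joint_law d k G = PiM {..<k} (\<lambda>j. vec_law d (G j))"

end

theory Submission
  imports Defs
begin

(*
  Condition on all factors but the last: writing x = z \<otimes> y, the quadratic form x\<^sup>T A x is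
  y\<^sup>T B(z) y for a positive semidefinite d \<times> d matrix B(z). For y with independent coordinates of
  mean 0, variance 1 and fourth moment at most 3, expanding the square and pairing indices
  gives E[(y\<^sup>T B y)\<^sup>2] \<le> (tr B)\<^sup>2 + 2 tr(B\<^sup>2) \<le> 3 (tr B)\<^sup>2. Since tr B(z) = z\<^sup>T C z for the partial
  trace C of A, which is again positive semidefinite with tr C = tr A, induction on k gives
  E[(x\<^sup>T A x)\<^sup>2] \<le> 3\<^sup>k (tr A)\<^sup>2, which bounds the variance.
*)

lemma psdI:
  assumes "\<And>i j. i < n \<Longrightarrow> j < n \<Longrightarrow> B i j = B j i" and "\<And>v. 0 \<le> quad_form n B v"
  shows "psd n B"
  using assms by (simp add: psd_def quad_form_def)

lemma psd_sym: "psd n B \<Longrightarrow> i < n \<Longrightarrow> j < n \<Longrightarrow> B i j = B j i"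
  by (simp add: psd_def)

lemma psd_quad_form_nonneg: "psd n B \<Longrightarrow> 0 \<le> quad_form n B v"
  by (simp add: psd_def quad_form_def)

lemma quad_form_unit:
  assumes "a < n"
  shows "quad_form n B (\<lambda>i. if i = a then 1 else 0) = B a a"
proof -
  have unit_sum: "(\<Sum>i<n. (if i = a then 1 else 0) * f i) = f a" for f :: "nat \<Rightarrow> real"
  proof -
    have "(\<Sum>i<n. (if i = a then 1 else 0) * f i) = (\<Sum>i<n. if i = a then f i else 0)"
      by (intro sum.cong) auto
    also have "\<dots> = f a"
      using assms by simp
    finally show ?thesis .
  qed
  have "quad_form n B (\<lambda>i. if i = a then 1 else 0)
      = (\<Sum>i<n. (if i = a then 1 else 0) * (\<Sum>j<n. (if j = a then 1 else 0) * B i j))"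
    by (simp add: quad_form_def sum_distrib_left mult_ac)
  also have "\<dots> = B a a"
    by (simp only: unit_sum)
  finally show ?thesis .
qed

lemma quad_form_two_points:
  assumes "a < n" "b < n" "a \<noteq> b"
  shows "quad_form n B (\<lambda>i. if i = a then s else if i = b then t else 0)
           = s * s * B a a + s * t * B a b + t * s * B b a + t * t * B b b"
proof -
  define v :: "nat \<Rightarrow> real" where "v = (\<lambda>i. if i = a then s else if i = b then t else 0)"
  have v_sum: "(\<Sum>i<n. v i * f i) = s * f a + t * f b" for f :: "nat \<Rightarrow> real"
  proof -
    have "(\<Sum>i<n. v i * f i) = (\<Sum>i<n. (if i = a then s * f i else 0) + (if i = b then t * f i else 0))"
      using assms(3) by (intro sum.cong) (auto simp: v_def)
    also have "\<dots> = s * f a + t * f b"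
      using assms(1,2) by (simp add: sum.distrib)
    finally show ?thesis .
  qed
  have "quad_form n B v = (\<Sum>i<n. v i * (\<Sum>j<n. v j * B i j))"
    by (simp add: quad_form_def sum_distrib_left mult_ac)
  also have "\<dots> = s * (s * B a a + t * B a b) + t * (s * B b a + t * B b b)"
    by (simp only: v_sum)
  also have "\<dots> = s * s * B a a + s * t * B a b + t * s * B b a + t * t * B b b"
    by (simp add: algebra_simps)
  finally show ?thesis
    unfolding v_def .
qed

lemma square_le_of_nonneg_binary_form:
  fixes x y z :: real
  assumes nonneg: "\<And>s t. 0 \<le> s * s * x + 2 * s * t * y + t * t * z"
  shows "y\<^sup>2 \<le> x * z"
proof (cases "z = 0")
  case True
  have "y = 0"
  proof (rule ccontr)
    assume "y \<noteq> 0"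
    define t where "t = - (x + 1) / (2 * y)"
    have "2 * t * y = - (x + 1)"
      using \<open>y \<noteq> 0\<close> by (simp add: t_def)
    then show False
      using nonneg[of 1 t] True by simp
  qed
  then show ?thesis using True by simp
next
  case False
  then have "0 < z" using nonneg[of 0 1] by simp
  have "0 \<le> z * z * x + 2 * z * (-y) * y + (-y) * (-y) * z" by (rule nonneg)
  also have "\<dots> = z * (x * z - y\<^sup>2)" by (simp add: algebra_simps power2_eq_square)
  finally show ?thesis using \<open>0 < z\<close> by (simp add: zero_le_mult_iff)
qed

lemma psd_diag_nonneg:
  assumes "psd n B" "a < n"
  shows "0 \<le> B a a"
proof -
  have "0 \<le> quad_form n B (\<lambda>i. if i = a then 1 else 0)"
    using assms(1) by (rule psd_quad_form_nonneg)
  then show ?thesis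
    using quad_form_unit[OF assms(2)] by simp
qed

lemma psd_entry_square_le:
  assumes "psd n B" "a < n" "b < n"
  shows "(B a b)\<^sup>2 \<le> B a a * B b b"
proof (cases "a = b")
  case True
  then show ?thesis by (simp add: power2_eq_square)
next
  case False
  show ?thesis
  proof (rule square_le_of_nonneg_binary_form)
    fix s t :: real
    have "0 \<le> quad_form n B (\<lambda>i. if i = a then s else if i = b then t else 0)"
      using assms(1) by (rule psd_quad_form_nonneg)
    also have "\<dots> = s * s * B a a + 2 * s * t * B a b + t * t * B b b"
      using quad_form_two_points[OF assms(2,3) False] psd_sym[OF assms(1) assms(3,2)] by simp
    finally show "0 \<le> s * s * B a a + 2 * s * t * B a b + t * t * B b b" .
  qed
qed

section \<open>Block structure of Kronecker products\<close>

lemma sum_lessThan_mult: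
  fixes f :: "nat \<Rightarrow> 'a::comm_monoid_add"
  shows "(\<Sum>i<m * d. f i) = (\<Sum>p<m. \<Sum>a<d. f (p * d + a))"
proof (induction m)
  case (Suc m)
  have shift: "(\<Sum>i<m * d + e. f i) = (\<Sum>i<m * d. f i) + (\<Sum>a<e. f (m * d + a))" for e
    by (induction e) (simp_all add: add.assoc)
  have "(\<Sum>i<Suc m * d. f i) = (\<Sum>i<m * d + d. f i)"
    by (simp only: mult_Suc add.commute)
  also have "\<dots> = (\<Sum>p<Suc m. \<Sum>a<d. f (p * d + a))"
    by (simp only: shift Suc sum.lessThan_Suc)
  finally show ?case .
qed simp

lemma block_index_less:
  assumes "p < m" "a < d"
  shows "p * d + a < m * (d::nat)"
proof -
  have "p * d + a < Suc p * d" using assms(2) by simp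
  also have "\<dots> \<le> m * d" using mult_le_mono1[OF Suc_leI[OF assms(1)]] .
  finally show ?thesis .
qed

text \<open>An index \<open>p * d + a < m * d\<close> is the pair \<open>(p, a)\<close>, so \<open>partial_form d m A z\<close> is
  \<open>(z \<otimes> I\<^sub>d)\<^sup>T A (z \<otimes> I\<^sub>d)\<close> and \<open>partial_trace d A\<close> is the trace over the second factor.\<close>

definition partial_form ::
    "nat \<Rightarrow> nat \<Rightarrow> (nat \<Rightarrow> nat \<Rightarrow> real) \<Rightarrow> (nat \<Rightarrow> real) \<Rightarrow> nat \<Rightarrow> nat \<Rightarrow> real" where
  "partial_form d m A z a b = (\<Sum>p<m. \<Sum>q<m. z p * A (p * d + a) (q * d + b) * z q)"

definition partial_trace :: "nat \<Rightarrow> (nat \<Rightarrow> nat \<Rightarrow> real) \<Rightarrow> nat \<Rightarrow> nat \<Rightarrow> real" where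
  "partial_trace d A p q = (\<Sum>a<d. A (p * d + a) (q * d + a))"

lemma quad_form_kronecker:
  "quad_form (m * d) A (\<lambda>i. z (i div d) * v (i mod d)) = quad_form d (partial_form d m A z) v"
proof -
  have block: "(p * d + a) div d = p" "(p * d + a) mod d = a" if "a < d" for p a
    using that by auto
  let ?g = "\<lambda>p a q b. z p * v a * A (p * d + a) (q * d + b) * (z q * v b)"
  have "quad_form (m * d) A (\<lambda>i. z (i div d) * v (i mod d)) = (\<Sum>p<m. \<Sum>a<d. \<Sum>q<m. \<Sum>b<d. ?g p a q b)"
    unfolding quad_form_def sum_lessThan_mult by (intro sum.cong refl) (simp add: block)
  also have "\<dots> = (\<Sum>a<d. \<Sum>p<m. \<Sum>b<d. \<Sum>q<m. ?g p a q b)"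
    by (subst sum.swap) (intro sum.cong refl sum.swap)
  also have "\<dots> = (\<Sum>a<d. \<Sum>b<d. \<Sum>p<m. \<Sum>q<m. ?g p a q b)"
    by (intro sum.cong refl sum.swap)
  also have "\<dots> = quad_form d (partial_form d m A z) v"
    unfolding quad_form_def partial_form_def sum_distrib_left sum_distrib_right
    by (intro sum.cong refl) (simp add: mult_ac)
  finally show ?thesis .
qed

lemma mtrace_partial_trace: "mtrace m (partial_trace d A) = mtrace (m * d) A"
  by (simp add: mtrace_def partial_trace_def sum_lessThan_mult)

lemma quad_form_partial_trace: "quad_form m (partial_trace d A) z = mtrace d (partial_form d m A z)"
proof -
  have "quad_form m (partial_trace d A) z
      = (\<Sum>p<m. \<Sum>q<m. \<Sum>a<d. z p * A (p * d + a) (q * d + a) * z q)"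
    by (simp add: quad_form_def partial_trace_def sum_distrib_left sum_distrib_right)
  also have "\<dots> = (\<Sum>a<d. \<Sum>p<m. \<Sum>q<m. z p * A (p * d + a) (q * d + a) * z q)"
    by (subst sum.swap) (intro sum.cong refl sum.swap)
  finally show ?thesis
    by (simp add: mtrace_def partial_form_def)
qed

lemma psd_partial_form:
  assumes "psd (m * d) A"
  shows "psd d (partial_form d m A z)"
proof -
  have "partial_form d m A z a b = partial_form d m A z b a" if "a < d" "b < d" for a b
    unfolding partial_form_def
  proof (subst sum.swap, intro sum.cong refl)
    fix p q assume "p \<in> {..<m}" "q \<in> {..<m}"
    then have "A (p * d + a) (q * d + b) = A (q * d + b) (p * d + a)"
      using that by (intro psd_sym[OF assms] block_index_less) auto
    then show "z p * A (p * d + a) (q * d + b) * z q = z q * A (q * d + b) (p * d + a) * z p"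
      by simp
  qed
  moreover have "0 \<le> quad_form d (partial_form d m A z) v" for v
    unfolding quad_form_kronecker[symmetric] using assms by (rule psd_quad_form_nonneg)
  ultimately show ?thesis
    by (rule psdI)
qed

lemma psd_partial_trace:
  assumes "psd (m * d) A"
  shows "psd m (partial_trace d A)"
proof -
  have "partial_trace d A p q = partial_trace d A q p" if "p < m" "q < m" for p q
    unfolding partial_trace_def
  proof (intro sum.cong refl)
    fix a assume "a \<in> {..<d}"
    then show "A (p * d + a) (q * d + a) = A (q * d + a) (p * d + a)"
      using that by (intro psd_sym[OF assms] block_index_less) auto
  qed
  moreover have "0 \<le> quad_form m (partial_trace d A) z" for z
    unfolding quad_form_partial_trace mtrace_def
    by (intro sum_nonneg psd_diag_nonneg[OF psd_partial_form[OF assms]]) simp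
  ultimately show ?thesis
    by (rule psdI)
qed

lemma kron_vec_Suc: "kron_vec d (Suc k) (xs(k := y)) i = kron_vec d k xs (i div d) * y (i mod d)"
proof -
  have "(\<Prod>j<k. (xs(k := y)) j (i div d ^ (Suc k - 1 - j) mod d)) = kron_vec d k xs (i div d)"
    unfolding kron_vec_def
  proof (intro prod.cong refl)
    fix j assume "j \<in> {..<k}"
    then have "Suc k - 1 - j = Suc (k - 1 - j)" and "j \<noteq> k"
      by auto
    then show "(xs(k := y)) j (i div d ^ (Suc k - 1 - j) mod d) = xs j (i div d div d ^ (k - 1 - j) mod d)"
      by (simp add: div_mult2_eq)
  qed
  then show ?thesis
    by (simp add: kron_vec_def)
qed

section \<open>Fourth moments of quadratic forms\<close>

text \<open>The number of ways to pair up the index quadruple \<open>(a, b, c, e)\<close>: the value of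
  \<open>E[y\<^sub>a y\<^sub>b y\<^sub>c y\<^sub>e]\<close> for a standard Gaussian vector (Isserlis).\<close>

definition pairings :: "nat \<Rightarrow> nat \<Rightarrow> nat \<Rightarrow> nat \<Rightarrow> real" where
  "pairings a b c e = of_bool (a = b \<and> c = e) + of_bool (a = c \<and> b = e) + of_bool (a = e \<and> b = c)"

lemma sum_pairings:
  fixes B :: "nat \<Rightarrow> nat \<Rightarrow> real"
  shows "(\<Sum>a<d. \<Sum>b<d. \<Sum>c<d. \<Sum>e<d. B a b * B c e * pairings a b c e)
       = (mtrace d B)\<^sup>2 + (\<Sum>a<d. \<Sum>b<d. B a b * B a b) + (\<Sum>a<d. \<Sum>b<d. B a b * B b a)"
proof -
  have "(\<Sum>a<d. \<Sum>b<d. \<Sum>c<d. \<Sum>e<d. B a b * B c e * pairings a b c e)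
      = (\<Sum>a<d. \<Sum>b<d. \<Sum>c<d. \<Sum>e<d. (if e = c then (if b = a then B a a * B c c else 0) else 0)
          + (if e = b then (if c = a then B a b * B a b else 0) else 0)
          + (if e = a then (if c = b then B a b * B b a else 0) else 0))"
    by (intro sum.cong refl) (auto simp: pairings_def)
  also have "\<dots> = (\<Sum>a<d. \<Sum>b<d. (if b = a then B a a * mtrace d B else 0) + B a b * B a b + B a b * B b a)"
    by (intro sum.cong refl) (simp add: sum.distrib mtrace_def sum_distrib_left)
  also have "\<dots> = (mtrace d B)\<^sup>2 + (\<Sum>a<d. \<Sum>b<d. B a b * B a b) + (\<Sum>a<d. \<Sum>b<d. B a b * B b a)"
    by (simp add: sum.distrib mtrace_def power2_eq_square sum_distrib_right)
  finally show ?thesis .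
qed

lemma sum_pairings_le:
  assumes "psd d B"
  shows "(\<Sum>a<d. \<Sum>b<d. \<Sum>c<d. \<Sum>e<d. B a b * B c e * pairings a b c e) \<le> 3 * (mtrace d B)\<^sup>2"
proof -
  have "B a b * B a b \<le> B a a * B b b" and "B a b * B b a \<le> B a a * B b b" if "a < d" "b < d" for a b
    using psd_entry_square_le[OF assms that] psd_sym[OF assms that] by (simp_all add: power2_eq_square)
  then have "(\<Sum>a<d. \<Sum>b<d. B a b * B a b) \<le> (mtrace d B)\<^sup>2"
    and "(\<Sum>a<d. \<Sum>b<d. B a b * B b a) \<le> (mtrace d B)\<^sup>2"
    by (auto simp: power2_eq_square mtrace_def sum_product intro!: sum_mono)
  then show ?thesis
    unfolding sum_pairings by linarith
qed

lemma square_quad_form: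
  "(quad_form d B y)\<^sup>2 = (\<Sum>a<d. \<Sum>b<d. \<Sum>c<d. \<Sum>e<d. B a b * B c e * (y a * y b * y c * y e))"
  unfolding quad_form_def power2_eq_square sum_distrib_right sum_distrib_left
  by (intro sum.cong refl) (simp add: mult_ac)

locale standardized_law = prob_space M for M :: "real measure" +
  assumes integrable_power: "n \<le> 4 \<Longrightarrow> integrable M (\<lambda>x. x ^ n)"
    and mean_zero: "(\<integral>x. x \<partial>M) = 0"
    and second_moment: "(\<integral>x. x ^ 2 \<partial>M) = 1"
    and fourth_moment_le: "(\<integral>x. x ^ 4 \<partial>M) \<le> 3"
begin

lemma borel_measurable_id [measurable]: "(\<lambda>x. x) \<in> borel_measurable M"
  using integrable_power[of 1] by simp

definition moment :: "nat \<Rightarrow> real" where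
  "moment n = (\<integral>x. x ^ n \<partial>M)"

lemma moment_0: "moment 0 = 1"
  by (simp add: moment_def prob_space)

(* Stated with Suc so that they apply to the counts produced by occurrences below. *)
lemma moment_1: "moment (Suc 0) = 0"
  using mean_zero by (simp add: moment_def)

lemma moment_2: "moment (Suc (Suc 0)) = 1"
  using second_moment by (simp add: moment_def numeral_2_eq_2)

lemma moment_4: "moment (Suc (Suc (Suc (Suc 0)))) \<le> 3"
  using fourth_moment_le by (simp add: moment_def numeral_eq_Suc)

end

lemma integral_rademacher: "(\<integral>x. (f :: real \<Rightarrow> real) x \<partial>rademacher) = (f (-1) + f 1) / 2"
  unfolding rademacher_def by (subst integral_pmf_of_set) auto

lemma standardized_law_std_normal: "standardized_law std_normal_distribution"
proof (intro standardized_law.intro standardized_law_axioms.intro)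
  show "prob_space std_normal_distribution"
    by (simp add: prob_space_normal_density)
  show "(\<integral>x. x \<partial>std_normal_distribution) = 0"
    using integral_std_normal_distribution_moment_odd[of 1] by simp
  show "(\<integral>x. x ^ 2 \<partial>std_normal_distribution) = 1"
    using std_normal_distribution_even_moments(1)[of 1] by simp
  show "(\<integral>x. x ^ 4 \<partial>std_normal_distribution) \<le> 3"
    using std_normal_distribution_even_moments(1)[of 2] by (simp add: fact_numeral)
qed (rule integrable_std_normal_distribution_moment)

lemma standardized_law_rademacher: "standardized_law rademacher"
proof (intro standardized_law.intro standardized_law_axioms.intro)
  show "prob_space rademacher"
    unfolding rademacher_def by (rule prob_space_measure_pmf)
  show "integrable rademacher (\<lambda>x. x ^ n)" for n
    unfolding rademacher_def by (rule integrable_measure_pmf_finite) simp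
qed (simp_all add: integral_rademacher)

lemma standardized_law_coord_law: "standardized_law (coord_law gauss)"
  by (simp add: coord_law_def standardized_law_std_normal standardized_law_rademacher)

lemma borel_measurable_PiM_component_outside:
  "j \<notin> J \<Longrightarrow> (\<lambda>x. f (x j)) \<in> borel_measurable (PiM J M)"
  by (subst measurable_cong[where g="\<lambda>_. f undefined"]) (auto simp: space_PiM PiE_def extensional_def)

lemma prod_power_of_bool_eq:
  fixes f :: "'a \<Rightarrow> 'b::comm_monoid_mult"
  assumes "finite A" "a \<in> A"
  shows "(\<Prod>u\<in>A. f u ^ of_bool (u = a)) = f a"
proof -
  have "(\<Prod>u\<in>A. f u ^ of_bool (u = a)) = (\<Prod>u\<in>A. if u = a then f u else 1)"
    by (intro prod.cong) auto
  also have "\<dots> = f a"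
    using assms by simp
  finally show ?thesis .
qed

definition occurrences :: "nat \<Rightarrow> nat \<Rightarrow> nat \<Rightarrow> nat \<Rightarrow> nat \<Rightarrow> nat" where
  "occurrences a b c e u = of_bool (u = a) + of_bool (u = b) + of_bool (u = c) + of_bool (u = e)"

lemma product4_eq_prod_occurrences:
  assumes "a < d" "b < d" "c < d" "e < d"
  shows "y a * y b * y c * y e = (\<Prod>u<d. y u ^ occurrences a b c e u)"
  unfolding occurrences_def power_add prod.distrib using assms by (simp add: prod_power_of_bool_eq)

context standardized_law
begin

lemma borel_measurable_coordinate [measurable]: "(\<lambda>y. y a) \<in> borel_measurable (PiM I (\<lambda>_. M))"
proof (cases "a \<in> I")
  case True
  show ?thesis
    using measurable_compose[OF measurable_component_singleton[OF True] borel_measurable_id] .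
next
  case False
  then show ?thesis
    using borel_measurable_PiM_component_outside[of a I "\<lambda>x. x"] by simp
qed

lemma product_sigma_finite_const: "product_sigma_finite (\<lambda>_. M)"
  unfolding product_sigma_finite_def using prob_space_axioms prob_space_imp_sigma_finite by blast

lemma
  assumes "a < d" "b < d" "c < d" "e < d"
  shows integrable_coordinate_product4: "integrable (PiM {..<d} (\<lambda>_. M)) (\<lambda>y. y a * y b * y c * y e)"
    and integral_coordinate_product4:
      "(\<integral>y. y a * y b * y c * y e \<partial>PiM {..<d} (\<lambda>_. M)) = (\<Prod>u<d. moment (occurrences a b c e u))"
proof -
  interpret product_sigma_finite "\<lambda>_. M" by (rule product_sigma_finite_const)
  have power_le_4: "occurrences a b c e u \<le> 4" for u
    by (simp add: occurrences_def)
  have product: "(\<lambda>y. y a * y b * y c * y e) = (\<lambda>y. \<Prod>u<d. (\<lambda>u t. t ^ occurrences a b c e u) u (y u))"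
    by (intro ext product4_eq_prod_occurrences[OF assms])
  show "integrable (PiM {..<d} (\<lambda>_. M)) (\<lambda>y. y a * y b * y c * y e)"
    unfolding product by (intro product_integrable_prod) (auto intro: integrable_power power_le_4)
  show "(\<integral>y. y a * y b * y c * y e \<partial>PiM {..<d} (\<lambda>_. M)) = (\<Prod>u<d. moment (occurrences a b c e u))"
    unfolding product by (subst product_integral_prod) (auto intro: integrable_power power_le_4 simp: moment_def)
qed

lemma prod_moments_occurrences_eq:
  assumes "a < d" "b < d" "c < d" "e < d"
  shows "(\<Prod>u<d. moment (occurrences a b c e u)) = (\<Prod>u\<in>{a, b, c, e}. moment (occurrences a b c e u))"
  by (rule prod.mono_neutral_right) (use assms in \<open>auto simp: occurrences_def moment_0\<close>)

lemma prod_moments_eq_pairings: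
  assumes "\<not> (a = b \<and> b = c \<and> c = e)"
  shows "(\<Prod>u\<in>{a, b, c, e}. moment (occurrences a b c e u)) = pairings a b c e"
  using assms
  by (cases "a = b"; cases "a = c"; cases "a = e"; cases "b = c"; cases "b = e"; cases "c = e")
     (auto simp: occurrences_def pairings_def moment_0 moment_1 moment_2 prod.insert_if)

lemma prod_moments_diagonal_le: "(\<Prod>u\<in>{a, a, a, a}. moment (occurrences a a a a u)) \<le> pairings a a a a"
  using moment_4 by (simp add: occurrences_def pairings_def numeral_eq_Suc)

lemma nn_integral_square_quad_form_le:
  assumes "psd d B"
  shows "(\<integral>\<^sup>+y. ennreal ((quad_form d B y)\<^sup>2) \<partial>PiM {..<d} (\<lambda>_. M)) \<le> ennreal (3 * (mtrace d B)\<^sup>2)"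
proof -
  let ?V = "PiM {..<d} (\<lambda>_. M)"
  let ?t = "\<lambda>a b c e y. B a b * B c e * (y a * y b * y c * y e)"
  have term_integrable: "integrable ?V (?t a b c e)" if "a < d" "b < d" "c < d" "e < d" for a b c e
    using integrable_coordinate_product4[OF that] by simp
  have term_integral: "(\<integral>y. ?t a b c e y \<partial>?V) \<le> B a b * B c e * pairings a b c e"
    if "a < d" "b < d" "c < d" "e < d" for a b c e
  proof -
    have "(\<integral>y. ?t a b c e y \<partial>?V) = B a b * B c e * (\<Prod>u\<in>{a, b, c, e}. moment (occurrences a b c e u))"
      using integral_coordinate_product4[OF that] prod_moments_occurrences_eq[OF that] by simp
    also have "\<dots> \<le> B a b * B c e * pairings a b c e"
    proof (cases "a = b \<and> b = c \<and> c = e")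
      case True
      then show ?thesis
        using prod_moments_diagonal_le[of a] psd_diag_nonneg[OF assms that(1)] by (auto intro: mult_left_mono)
    next
      case False
      then show ?thesis by (simp add: prod_moments_eq_pairings)
    qed
    finally show ?thesis .
  qed
  have "(\<integral>y. (\<Sum>a<d. \<Sum>b<d. \<Sum>c<d. \<Sum>e<d. ?t a b c e y) \<partial>?V)
      = (\<Sum>a<d. \<Sum>b<d. \<Sum>c<d. \<Sum>e<d. \<integral>y. ?t a b c e y \<partial>?V)"
    by (subst Bochner_Integration.integral_sum,
        auto simp: integrable_coordinate_product4 intro!: Bochner_Integration.integrable_sum sum.cong)+
  also have "\<dots> \<le> (\<Sum>a<d. \<Sum>b<d. \<Sum>c<d. \<Sum>e<d. B a b * B c e * pairings a b c e)"
    by (intro sum_mono term_integral) auto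
  also have "\<dots> \<le> 3 * (mtrace d B)\<^sup>2"
    by (rule sum_pairings_le[OF assms])
  finally have integral_le: "(\<integral>y. (quad_form d B y)\<^sup>2 \<partial>?V) \<le> 3 * (mtrace d B)\<^sup>2"
    by (simp only: square_quad_form)
  have "integrable ?V (\<lambda>y. (quad_form d B y)\<^sup>2)"
    unfolding square_quad_form by (intro Bochner_Integration.integrable_sum term_integrable) auto
  then have "(\<integral>\<^sup>+y. ennreal ((quad_form d B y)\<^sup>2) \<partial>?V) = ennreal (\<integral>y. (quad_form d B y)\<^sup>2 \<partial>?V)"
    by (rule nn_integral_eq_integral) simp
  with integral_le show ?thesis
    by (simp add: ennreal_leI)
qed

lemma nn_integral_square_quad_form_kronecker_le:
  assumes "psd (m * d) A"
  shows "(\<integral>\<^sup>+y. ennreal ((quad_form (m * d) A (\<lambda>i. z (i div d) * y (i mod d)))\<^sup>2) \<partial>PiM {..<d} (\<lambda>_. M))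
           \<le> ennreal (3 * (quad_form m (partial_trace d A) z)\<^sup>2)"
  unfolding quad_form_kronecker quad_form_partial_trace
  by (rule nn_integral_square_quad_form_le[OF psd_partial_form[OF assms]])

end

section \<open>Induction over the tensor factors\<close>

lemma (in prob_space) variance_le_of_nn_integral_square_le:
  assumes X: "X \<in> borel_measurable M" and "0 \<le> c"
    and second_moment: "(\<integral>\<^sup>+x. ennreal ((X x)\<^sup>2) \<partial>M) \<le> ennreal c"
  shows "variance X \<le> c"
proof -
  have "(\<integral>\<^sup>+x. ennreal (norm ((X x)\<^sup>2)) \<partial>M) < \<infinity>"
    using le_less_trans[OF second_moment ennreal_less_top] by simp
  then have square_integrable: "integrable M (\<lambda>x. (X x)\<^sup>2)"
    using X by (simp add: integrable_iff_bounded)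
  have "ennreal (expectation (\<lambda>x. (X x)\<^sup>2)) = (\<integral>\<^sup>+x. ennreal ((X x)\<^sup>2) \<partial>M)"
    by (rule nn_integral_eq_integral[OF square_integrable, symmetric]) simp
  then have "ennreal (expectation (\<lambda>x. (X x)\<^sup>2)) \<le> ennreal c"
    using second_moment by simp
  then have "expectation (\<lambda>x. (X x)\<^sup>2) \<le> c"
    using \<open>0 \<le> c\<close> by (simp add: ennreal_le_iff)
  moreover have "variance X = expectation (\<lambda>x. (X x)\<^sup>2) - (expectation X)\<^sup>2"
    using square_integrable_imp_integrable[OF X square_integrable] square_integrable by (rule variance_eq)
  ultimately show ?thesis
    using zero_le_power2[of "expectation X"] by linarith
qed

context
  fixes M :: "nat \<Rightarrow> real measure"
  assumes standardized: "\<And>j. standardized_law (M j)"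
begin

lemma prob_space_PiM_coordinates: "prob_space (PiM I (\<lambda>_. M j))"
  using standardized by (intro prob_space_PiM standardized_law.axioms)

lemma prob_space_PiM_standardized: "prob_space (PiM J (\<lambda>j. PiM I (\<lambda>_. M j)))"
  by (intro prob_space_PiM prob_space_PiM_coordinates)

lemma borel_measurable_PiM_coordinate [measurable]:
  "(\<lambda>xs. xs j a) \<in> borel_measurable (PiM J (\<lambda>j. PiM I (\<lambda>_. M j)))"
proof (cases "j \<in> J")
  case True
  show ?thesis
    using measurable_compose[OF measurable_component_singleton[OF True]
        standardized_law.borel_measurable_coordinate[OF standardized]] .
next
  case False
  then show ?thesis
    using borel_measurable_PiM_component_outside[of j J "\<lambda>x. x a"] by simp
qed

lemma nn_integral_square_quad_form_kron_vec_le: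
  assumes "psd (d ^ k) A"
  shows "(\<integral>\<^sup>+xs. ennreal ((quad_form (d ^ k) A (kron_vec d k xs))\<^sup>2) \<partial>PiM {..<k} (\<lambda>j. PiM {..<d} (\<lambda>_. M j)))
           \<le> ennreal (3 ^ k * (mtrace (d ^ k) A)\<^sup>2)"
  using assms
proof (induction k arbitrary: A)
  case 0
  show ?case
    using prob_space.emeasure_space_1[OF prob_space_PiM_standardized[of "{}" "{..<d}"]]
    by (simp add: quad_form_def kron_vec_def mtrace_def)
next
  case (Suc k)
  let ?V = "\<lambda>j. PiM {..<d} (\<lambda>_. M j)"
  let ?X = "\<lambda>A k xs. ennreal ((quad_form (d ^ k) A (kron_vec d k xs))\<^sup>2)"
  interpret product_sigma_finite ?V
    unfolding product_sigma_finite_def by (intro allI prob_space_imp_sigma_finite prob_space_PiM_coordinates)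
  have "?X A (Suc k) \<in> borel_measurable (PiM (insert k {..<k}) ?V)"
    unfolding quad_form_def kron_vec_def by measurable
  then have "(\<integral>\<^sup>+xs. ?X A (Suc k) xs \<partial>PiM {..<Suc k} ?V)
      = (\<integral>\<^sup>+xs. (\<integral>\<^sup>+y. ?X A (Suc k) (xs(k := y)) \<partial>?V k) \<partial>PiM {..<k} ?V)"
    unfolding lessThan_Suc by (intro product_nn_integral_insert) auto
  also have "\<dots> \<le> (\<integral>\<^sup>+xs. 3 * ?X (partial_trace d A) k xs \<partial>PiM {..<k} ?V)"
  proof (rule nn_integral_mono)
    fix xs
    have "(\<integral>\<^sup>+y. ?X A (Suc k) (xs(k := y)) \<partial>?V k)
        = (\<integral>\<^sup>+y. ennreal ((quad_form (d ^ k * d) A (\<lambda>i. kron_vec d k xs (i div d) * y (i mod d)))\<^sup>2) \<partial>?V k)"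
      by (simp only: kron_vec_Suc[abs_def] power_Suc2)
    also have "\<dots> \<le> ennreal (3 * (quad_form (d ^ k) (partial_trace d A) (kron_vec d k xs))\<^sup>2)"
      using Suc.prems by (intro standardized_law.nn_integral_square_quad_form_kronecker_le standardized)
        (simp add: mult.commute)
    finally show "(\<integral>\<^sup>+y. ?X A (Suc k) (xs(k := y)) \<partial>?V k) \<le> 3 * ?X (partial_trace d A) k xs"
      by (simp add: ennreal_mult)
  qed
  also have "\<dots> = 3 * (\<integral>\<^sup>+xs. ?X (partial_trace d A) k xs \<partial>PiM {..<k} ?V)"
    by (rule nn_integral_cmult) (unfold quad_form_def kron_vec_def, measurable)
  also have "\<dots> \<le> 3 * ennreal (3 ^ k * (mtrace (d ^ k) (partial_trace d A))\<^sup>2)"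
    using Suc.prems by (intro mult_left_mono Suc.IH psd_partial_trace) (simp_all add: mult.commute)
  also have "\<dots> = ennreal (3 ^ Suc k * (mtrace (d ^ Suc k) A)\<^sup>2)"
    by (simp add: mtrace_partial_trace ennreal_mult mult.commute[of "d ^ k"] mult.assoc)
  finally show ?case .
qed

end

theorem theorem4:
  fixes d k :: nat and A :: "nat \<Rightarrow> nat \<Rightarrow> real" and G :: "nat \<Rightarrow> bool"
  assumes "psd (d ^ k) A"
  shows "prob_space.variance (joint_law d k G)
           (\<lambda>xs. quad_form (d ^ k) A (kron_vec d k xs))
         \<le> (3 ^ k * mtrace (d ^ k) A)\<^sup>2"
proof -
  let ?P = "PiM {..<k} (\<lambda>j. PiM {..<d} (\<lambda>_. coord_law (G j)))"
  let ?X = "\<lambda>xs. quad_form (d ^ k) A (kron_vec d k xs)"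
  have "prob_space.variance ?P ?X \<le> 3 ^ k * (mtrace (d ^ k) A)\<^sup>2"
  proof (rule prob_space.variance_le_of_nn_integral_square_le)
    show "prob_space ?P"
      using standardized_law_coord_law by (rule prob_space_PiM_standardized)
    show "?X \<in> borel_measurable ?P"
      using standardized_law_coord_law unfolding quad_form_def kron_vec_def by measurable
    show "(\<integral>\<^sup>+xs. ennreal ((?X xs)\<^sup>2) \<partial>?P) \<le> ennreal (3 ^ k * (mtrace (d ^ k) A)\<^sup>2)"
      using standardized_law_coord_law assms by (rule nn_integral_square_quad_form_kron_vec_le)
  qed simp
  also have "\<dots> \<le> (3 ^ k * 3 ^ k) * (mtrace (d ^ k) A)\<^sup>2"
    by (intro mult_right_mono) simp_all
  also have "\<dots> = (3 ^ k * mtrace (d ^ k) A)\<^sup>2"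
    by (simp add: power_mult_distrib power2_eq_square)
  finally show ?thesis
    by (simp add: joint_law_def vec_law_def)
qed

end
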